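(* Let $H\geq 2$ be an integer and $C>0$ a real number, let $A=\{\frac{b}{a}: a,b\in\mathbb{Z},\ 0<a\le H,\ |\frac ba|\le C\}$, and set $\varepsilon:=\frac{1}{H(H-1)}$. Let $f(x)=c_1x^{d_1}+\cdots+c_tx^{d_t}$ with $t\ge1$, integers $0\le d_1<\cdots<d_t$, and $c_1,\dots,c_t\in A\setminus\{0\}$, and let $\beta$ be a real number with $\beta\ge\frac{2C}{\varepsilon}+1$. Write $c_t=\frac{b}{a}$ with $a,b\in\mathbb{Z}$, $a>0$, $\gcd(a,b)=1$. For $i=1,2,\dots,H$ let $$I_i:=\left(\frac{f(\beta)}{\beta^{d_t}}\,i-\frac{\varepsilon}{2}\,i,\ \frac{f(\beta)}{\beta^{d_t}}\,i+\frac{\varepsilon}{2}\,i\right).$$ Then $I_a\cap\mathbb{Z}=\{b\}$, and whenever $a_0\in\{1,\dots,H\}$ and $b_0\in\mathbb{Z}$ satisfy $b_0\in I_{a_0}$, we have $\frac{b_0}{a_0}=\frac{b}{a}$.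
   Context: Here $f(\beta)$ is real since all coefficients are rational and $\beta$ is real. *)

theory Defs
  imports Complex_Main
begin

definition coeff_set :: "int \<Rightarrow> real \<Rightarrow> real set" where
  "coeff_set H C = {real_of_int b / real_of_int a | a b :: int.
      0 < a \<and> a \<le> H \<and> \<bar>real_of_int b / real_of_int a\<bar> \<le> C}"

definition interval_I :: "real \<Rightarrow> real \<Rightarrow> int \<Rightarrow> real set" where
  "interval_I r eps i = {r * real_of_int i - eps / 2 * real_of_int i <..< r * real_of_int i + eps / 2 * real_of_int i}"

end

theory Submission
  imports Defs
begin

text \<open>Dividing by the leading power \<open>\<beta>^d\<^sub>t\<close> leaves \<open>c\<^sub>t\<close> plus lower terms that, since the exponents
  strictly increase, are bounded by a geometric series in \<open>1/\<beta>\<close>, so \<open>f(\<beta>)/\<beta>^d\<^sub>t\<close> lies within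
  \<open>C/(\<beta> - 1) \<le> \<epsilon>/2\<close> of \<open>c\<^sub>t = b/a\<close>. Two distinct fractions with denominators in \<open>{1..H}\<close>
  differ by at least \<open>1/(H(H-1)) = \<epsilon>\<close>: with equal denominators by at least \<open>1/H\<close>, with distinct
  ones by at least the reciprocal of the product of denominators. Hence every fraction
  \<open>b\<^sub>0/a\<^sub>0\<close> with \<open>b\<^sub>0 \<in> I\<^sub>a\<^sub>0\<close>, being within \<open>\<epsilon>\<close> of \<open>b/a\<close>, equals it; and \<open>a \<le> H\<close> because the
  reduced denominator of \<open>c\<^sub>t\<close> divides every denominator of \<open>c\<^sub>t\<close>.\<close>

lemma coeff_set_abs_le: "x \<in> coeff_set H C \<Longrightarrow> \<bar>x\<bar> \<le> C"
  unfolding coeff_set_def by auto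

lemma sum_power_tail_less:
  fixes q :: real
  assumes "0 < q" "q < 1"
  shows "(\<Sum>i=1..<t. q ^ (t - i)) < q / (1 - q)"
proof -
  have "(\<Sum>i=1..<t. q ^ (t - i)) = (\<Sum>k<t-1. q ^ Suc k)"
    by (rule sum.reindex_bij_witness[where i="\<lambda>k. t - Suc k" and j="\<lambda>i. t - i - 1"])
       (auto simp: power_Suc[symmetric] Suc_diff_Suc)
  also have "\<dots> = q * ((1 - q ^ (t - 1)) / (1 - q))"
    using sum_gp_strict[of q "t - 1"] assms by (simp flip: sum_distrib_left)
  also have "\<dots> < q / (1 - q)"
    using assms by (simp add: field_simps)
  finally show ?thesis .
qed

lemma strict_mono_gap:
  fixes d :: "nat \<Rightarrow> nat"
  assumes hd: "\<And>i j. 1 \<le> i \<Longrightarrow> i < j \<Longrightarrow> j \<le> t \<Longrightarrow> d i < d j"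
    and "1 \<le> i" "i \<le> j" "j \<le> t"
  shows "d i + (j - i) \<le> d j"
  using assms(3,4)
proof (induction j rule: dec_induct)
  case base
  then show ?case by simp
next
  case (step n)
  have "d n < d (Suc n)" using hd[of n "Suc n"] assms(2) step by simp
  with step show ?case by (simp add: Suc_diff_le)
qed

lemma lacunary_sum_near_leading_coeff:
  fixes c :: "nat \<Rightarrow> real" and d :: "nat \<Rightarrow> nat" and \<beta> C :: real
  assumes "\<beta> > 1" "C > 0" "t \<ge> 1"
    and hd: "\<And>i j. 1 \<le> i \<Longrightarrow> i < j \<Longrightarrow> j \<le> t \<Longrightarrow> d i < d j"
    and hc: "\<And>i. 1 \<le> i \<Longrightarrow> i \<le> t \<Longrightarrow> \<bar>c i\<bar> \<le> C"
  shows "\<bar>(\<Sum>i=1..t. c i * \<beta> ^ d i) / \<beta> ^ d t - c t\<bar> < C / (\<beta> - 1)"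
proof -
  define q where "q = 1 / \<beta>"
  have q: "0 < q" "q < 1" using assms(1) unfolding q_def by auto
  have "{1..t} = insert t {1..<t}" using assms(3) by auto
  then have "(\<Sum>i=1..t. c i * \<beta> ^ d i) / \<beta> ^ d t - c t = (\<Sum>i=1..<t. c i * (\<beta> ^ d i / \<beta> ^ d t))"
    using assms(1) by (simp add: add_divide_distrib sum_divide_distrib)
  also have "\<bar>\<dots>\<bar> \<le> (\<Sum>i=1..<t. C * q ^ (t - i))"
  proof (rule order_trans[OF sum_abs sum_mono])
    fix i assume i: "i \<in> {1..<t}"
    have gap: "d i + (t - i) \<le> d t" using strict_mono_gap[where d=d and t=t and i=i and j=t, OF hd] i by auto
    have "\<beta> ^ d i / \<beta> ^ d t = q ^ (d t - d i)"
      unfolding q_def using assms(1) gap by (simp add: power_diff power_one_over)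
    also have "\<dots> \<le> q ^ (t - i)" using q gap by (intro power_decreasing) auto
    finally have "\<bar>c i\<bar> * (\<beta> ^ d i / \<beta> ^ d t) \<le> C * q ^ (t - i)"
      using hc[of i] i assms(1) by (intro mult_mono) auto
    then show "\<bar>c i * (\<beta> ^ d i / \<beta> ^ d t)\<bar> \<le> C * q ^ (t - i)"
      using assms(1) by (simp add: abs_mult)
  qed
  also have "\<dots> = C * (\<Sum>i=1..<t. q ^ (t - i))" by (simp add: sum_distrib_left)
  also have "\<dots> < C * (q / (1 - q))"
    using sum_power_tail_less[OF q, of t] assms(2) by (rule mult_strict_left_mono)
  also have "q / (1 - q) = 1 / (\<beta> - 1)" unfolding q_def using assms(1) by (simp add: field_simps)
  finally show ?thesis by simp
qed

lemma reduced_denominator_dvd: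
  fixes a b a' b' :: int
  assumes "coprime a b" "a' \<noteq> 0" "a \<noteq> 0"
    and "real_of_int b / real_of_int a = real_of_int b' / real_of_int a'"
  shows "a dvd a'"
proof -
  have "real_of_int (b * a') = real_of_int (b' * a)" using assms(2-4) by (simp add: field_simps)
  then have "b * a' = b' * a" by (simp only: of_int_eq_iff)
  then have "a dvd b * a'" by simp
  then show ?thesis using assms(1) by (simp add: coprime_dvd_mult_right_iff)
qed

lemma distinct_denominators_prod_le:
  fixes H a a0 :: int
  assumes "0 < a" "a \<le> H" "0 < a0" "a0 \<le> H" "a \<noteq> a0"
  shows "a0 * a \<le> H * (H - 1)"
proof (cases "a < a0")
  case True
  then show ?thesis using assms by (intro mult_mono) auto
next
  case False
  then have "a * a0 \<le> H * (H - 1)" using assms by (intro mult_mono) auto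
  then show ?thesis by (simp add: mult.commute)
qed

lemma distinct_fractions_separated:
  fixes H a b a0 b0 :: int
  assumes "H \<ge> 2" "0 < a" "a \<le> H" "0 < a0" "a0 \<le> H"
    and ne: "real_of_int b0 / real_of_int a0 \<noteq> real_of_int b / real_of_int a"
  shows "1 / (real_of_int H * (real_of_int H - 1)) \<le> \<bar>real_of_int b0 / real_of_int a0 - real_of_int b / real_of_int a\<bar>"
proof (cases "a = a0")
  case True
  then have "b0 \<noteq> b" using ne by auto
  then have "1 \<le> \<bar>real_of_int b0 - real_of_int b\<bar>" by linarith
  moreover have "real_of_int a \<le> real_of_int H * (real_of_int H - 1)"
  proof -
    have "real_of_int H * 1 \<le> real_of_int H * (real_of_int H - 1)"
      using assms(1) by (intro mult_left_mono) auto
    then show ?thesis using assms(3) by simp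
  qed
  ultimately have "1 / (real_of_int H * (real_of_int H - 1)) \<le> \<bar>real_of_int b0 - real_of_int b\<bar> / real_of_int a"
    using assms(1-3) by (intro frac_le) auto
  also have "\<dots> = \<bar>real_of_int b0 / real_of_int a0 - real_of_int b / real_of_int a\<bar>"
    using True assms(2) by (simp add: diff_divide_distrib[symmetric])
  finally show ?thesis .
next
  case False
  have num: "b0 * a - b * a0 \<noteq> 0"
    using ne assms(2,4) by (auto simp: field_simps simp flip: of_int_mult of_int_diff)
  have "real_of_int (a0 * a) \<le> real_of_int (H * (H - 1))"
    using distinct_denominators_prod_le[OF assms(2-5) False] by (simp only: of_int_le_iff)
  moreover have "1 \<le> real_of_int \<bar>b0 * a - b * a0\<bar>" using num by linarith
  ultimately have "1 / (real_of_int H * (real_of_int H - 1)) \<le> real_of_int \<bar>b0 * a - b * a0\<bar> / (real_of_int a0 * real_of_int a)"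
    using assms(2,4) by (intro frac_le) auto
  also have "\<dots> = \<bar>real_of_int b0 / real_of_int a0 - real_of_int b / real_of_int a\<bar>"
    using assms(2,4) by (simp add: field_simps abs_div)
  finally show ?thesis .
qed

lemma mem_interval_I_iff:
  assumes "i > 0"
  shows "real_of_int z \<in> interval_I r eps i \<longleftrightarrow> \<bar>real_of_int z / real_of_int i - r\<bar> < eps / 2"
proof -
  have "real_of_int z \<in> interval_I r eps i \<longleftrightarrow> \<bar>real_of_int z - r * real_of_int i\<bar> < eps / 2 * real_of_int i"
    unfolding interval_I_def greaterThanLessThan_iff abs_less_iff by linarith
  also have "\<bar>real_of_int z - r * real_of_int i\<bar> = \<bar>real_of_int z / real_of_int i - r\<bar> * real_of_int i"
    using assms by (simp add: abs_mult[symmetric] field_simps)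
  finally show ?thesis using assms by simp
qed

theorem lemma2p7:
  fixes H :: int and C :: real and t :: nat
    and c :: "nat \<Rightarrow> real" and d :: "nat \<Rightarrow> nat" and \<beta> :: real
    and a b :: int
  assumes hH: "H \<ge> 2"
    and hC: "C > 0"
    and ht: "t \<ge> 1"
    and hd: "\<And>i j. 1 \<le> i \<Longrightarrow> i < j \<Longrightarrow> j \<le> t \<Longrightarrow> d i < d j"
    and hc: "\<And>i. 1 \<le> i \<Longrightarrow> i \<le> t \<Longrightarrow> c i \<in> coeff_set H C - {0}"
    and h\<beta>: "\<beta> \<ge> 2 * C / (1 / (real_of_int H * (real_of_int H - 1))) + 1"
    and hab: "a > 0" "coprime a b" "c t = real_of_int b / real_of_int a"
  shows "{z :: int. real_of_int z \<in> interval_I ((\<Sum>i=1..t. c i * \<beta> ^ d i) / \<beta> ^ d t)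
                         (1 / (real_of_int H * (real_of_int H - 1))) a} = {b}
         \<and> (\<forall>a0 b0 :: int. 1 \<le> a0 \<and> a0 \<le> H \<and>
              real_of_int b0 \<in> interval_I ((\<Sum>i=1..t. c i * \<beta> ^ d i) / \<beta> ^ d t)
                         (1 / (real_of_int H * (real_of_int H - 1))) a0
              \<longrightarrow> real_of_int b0 / real_of_int a0 = real_of_int b / real_of_int a)"
proof -
  define eps where "eps = 1 / (real_of_int H * (real_of_int H - 1))"
  define r where "r = (\<Sum>i=1..t. c i * \<beta> ^ d i) / \<beta> ^ d t"
  have eps_pos: "eps > 0" using hH unfolding eps_def by simp
  have "0 < 2 * C / eps" using hC eps_pos by simp
  then have \<beta>_bound: "2 * C / eps \<le> \<beta> - 1" "\<beta> > 1"
    using h\<beta> unfolding eps_def by auto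
  have "\<bar>r - c t\<bar> < C / (\<beta> - 1)"
    unfolding r_def using hc ht hd hC \<beta>_bound(2)
    by (intro lacunary_sum_near_leading_coeff) (auto intro: coeff_set_abs_le)
  also have "\<dots> \<le> eps / 2" using \<beta>_bound eps_pos by (simp add: field_simps)
  finally have near: "\<bar>r - real_of_int b / real_of_int a\<bar> < eps / 2" using hab(3) by simp
  obtain a' b' :: int where a': "0 < a'" "a' \<le> H" "c t = real_of_int b' / real_of_int a'"
    using hc[of t] ht unfolding coeff_set_def by auto
  have "a dvd a'" using reduced_denominator_dvd[of a b a' b'] hab a' by simp
  then have a_le: "a \<le> H" using a' zdvd_imp_le by fastforce
  have fraction_eq: "real_of_int b0 / real_of_int a0 = real_of_int b / real_of_int a"
    if "1 \<le> a0" "a0 \<le> H" "real_of_int b0 \<in> interval_I r eps a0" for a0 b0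
  proof (rule ccontr)
    assume "real_of_int b0 / real_of_int a0 \<noteq> real_of_int b / real_of_int a"
    then have "eps \<le> \<bar>real_of_int b0 / real_of_int a0 - real_of_int b / real_of_int a\<bar>"
      unfolding eps_def using hH hab(1) a_le that(1,2) by (intro distinct_fractions_separated) auto
    moreover have "\<bar>real_of_int b0 / real_of_int a0 - r\<bar> < eps / 2"
      using mem_interval_I_iff[of a0] that by simp
    ultimately show False using near by linarith
  qed
  have "{z :: int. real_of_int z \<in> interval_I r eps a} = {b}"
  proof (intro set_eqI iffI)
    fix z assume "z \<in> {z :: int. real_of_int z \<in> interval_I r eps a}"
    then have "real_of_int z / real_of_int a = real_of_int b / real_of_int a"
      using fraction_eq[of a z] hab(1) a_le by simp
    then show "z \<in> {b}" using hab(1) by simp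
  next
    fix z assume "z \<in> {b}"
    then show "z \<in> {z :: int. real_of_int z \<in> interval_I r eps a}"
      using mem_interval_I_iff[of a b] hab(1) near by (simp add: abs_minus_commute)
  qed
  then show ?thesis using fraction_eq unfolding r_def eps_def by blast
qed

end
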